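(* Let $f$ be a subluminal rotational wave. Then $\sigma(\mathrm{P})$ is contained in the imaginary axis.
   Context: A traveling wave of speed $c$ ($c^2\neq1$) of $u_{tt}-u_{xx}+\sin u=0$ is a real solution $f$ of $(c^2-1)f''+\sin f=0$, with energy $E$ given by $\tfrac12(c^2-1)(f')^2+1-\cos f=E$. It is subluminal rotational if $c^2<1$ and $E<0$. Let $\gamma=1/(c^2-1)$. $\sigma(\mathrm{P})$ is the set of $\lambda\in\mathbb{C}$ for which $p''-2c\gamma\lambda p'+\gamma(\lambda^2+\cos f(z))p=0$ has a nontrivial solution bounded on $\mathbb{R}$. *)

theory Defs
  imports "HOL-Analysis.Analysis"
begin

definition traveling_wave :: "real \<Rightarrow> (real \<Rightarrow> real) \<Rightarrow> bool" where
  "traveling_wave c f \<longleftrightarrow> c\<^sup>2 \<noteq> 1 \<and>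
     (\<exists>f1 f2. \<forall>z. (f has_real_derivative f1 z) (at z) \<and>
                    (f1 has_real_derivative f2 z) (at z) \<and>
                    (c\<^sup>2 - 1) * f2 z + sin (f z) = 0)"

text \<open>Energy density; along a traveling wave it is constant, equal to E.\<close>
definition wave_energy :: "real \<Rightarrow> (real \<Rightarrow> real) \<Rightarrow> real \<Rightarrow> real" where
  "wave_energy c f z = (1/2) * (c\<^sup>2 - 1) * (deriv f z)\<^sup>2 + 1 - cos (f z)"

definition subluminal_rotational :: "real \<Rightarrow> (real \<Rightarrow> real) \<Rightarrow> bool" where
  "subluminal_rotational c f \<longleftrightarrow> traveling_wave c f \<and> c\<^sup>2 < 1 \<and>
     (\<exists>E. E < 0 \<and> (\<forall>z. wave_energy c f z = E))"

definition wave_gamma :: "real \<Rightarrow> real" where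
  "wave_gamma c = 1 / (c\<^sup>2 - 1)"

definition spectrum_P :: "real \<Rightarrow> (real \<Rightarrow> real) \<Rightarrow> complex set" where
  "spectrum_P c f = {l. \<exists>(p::real \<Rightarrow> complex) p1 p2.
     (\<forall>z. (p has_vector_derivative p1 z) (at z) \<and>
          (p1 has_vector_derivative p2 z) (at z) \<and>
          p2 z - 2 * of_real c * of_real (wave_gamma c) * l * p1 z
            + of_real (wave_gamma c) * (l\<^sup>2 + of_real (cos (f z))) * p z = 0) \<and>
     bounded (range p) \<and> (\<exists>z. p z \<noteq> 0)}"

end

(*
  With g = 1/(1 - c^2) > 0 the eigenvalue equation reads p'' + 2 c g l p' = g (l^2 + cos f) p.
  Since E < 0, f' never vanishes, and v = f''/f' solves the Riccati equation
  v' = g cos f - v^2 on the whole line. Putting D = p' - v p, the functional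
  Phi = Re (cnj l (D cnj p + c g l |p|^2)) has derivative Re l (|D|^2 + g |l|^2 |p|^2).
  If Re l \<noteq> 0, then sgn (Re l) Phi grows at a rate bounded below by |D|^2 + |p|^2 while it is
  itself bounded by a multiple of |D| |p| + |p|^2. For bounded p this is impossible unless
  Phi vanishes identically: large values blow up in finite time, positive values grow
  linearly, and negative values are handled by reflecting the line.
*)

theory Submission
  imports Defs
begin

text \<open>The abstract energy argument; in the application q = |p| and d = |p' - v p|.\<close>
locale energy_estimate =
  fixes H H' d q :: "real \<Rightarrow> real" and \<alpha> \<beta> B :: real
  assumes H_deriv: "\<And>t. (H has_real_derivative H' t) (at t)"
    and H'_ge: "\<And>t. \<alpha> * ((d t)\<^sup>2 + (q t)\<^sup>2) \<le> H' t"
    and abs_H_le: "\<And>t. \<bar>H t\<bar> \<le> \<beta> * (d t * q t + (q t)\<^sup>2)"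
    and d_nonneg: "\<And>t. 0 \<le> d t"
    and q_nonneg: "\<And>t. 0 \<le> q t"
    and q_le: "\<And>t. q t \<le> B"
    and alpha_pos: "0 < \<alpha>" and beta_pos: "0 < \<beta>" and B_pos: "0 < B"
begin

lemma H'_nonneg: "0 \<le> H' t"
proof -
  have "0 \<le> \<alpha> * ((d t)\<^sup>2 + (q t)\<^sup>2)" using alpha_pos by simp
  then show ?thesis using H'_ge[of t] by linarith
qed

lemma H_mono: "s \<le> t \<Longrightarrow> H s \<le> H t"
  using DERIV_nonneg_imp_nondecreasing H_deriv H'_nonneg by blast

lemma d_squared_le: "\<alpha> * (d t)\<^sup>2 \<le> H' t"
proof -
  have "\<alpha> * (d t)\<^sup>2 \<le> \<alpha> * ((d t)\<^sup>2 + (q t)\<^sup>2)" using alpha_pos by (intro mult_left_mono) auto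
  then show ?thesis using H'_ge[of t] by linarith
qed

lemma H'_ge_H_squared:
  assumes "2 * \<beta> * B\<^sup>2 \<le> H t"
  shows "\<alpha> / (4 * \<beta>\<^sup>2 * B\<^sup>2) * (H t)\<^sup>2 \<le> H' t"
proof -
  have "d t * q t + (q t)\<^sup>2 \<le> d t * B + B\<^sup>2"
    using mult_left_mono[OF q_le d_nonneg] power_mono[OF q_le q_nonneg] by (rule add_mono)
  then have "\<beta> * (d t * q t + (q t)\<^sup>2) \<le> \<beta> * (d t * B + B\<^sup>2)"
    using beta_pos by simp
  then have "H t \<le> \<beta> * (d t * B + B\<^sup>2)" using abs_H_le[of t] by linarith
  then have "H t / 2 \<le> \<beta> * B * d t" using assms by (simp add: algebra_simps)
  moreover have "0 < \<beta> * B\<^sup>2" using beta_pos B_pos by simp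
  then have "0 \<le> H t / 2" using assms by linarith
  ultimately have "(H t / 2)\<^sup>2 \<le> (\<beta> * B * d t)\<^sup>2" by (rule power_mono)
  then have "(H t)\<^sup>2 / (4 * \<beta>\<^sup>2 * B\<^sup>2) \<le> (d t)\<^sup>2"
    using beta_pos B_pos by (simp add: field_simps power_mult_distrib)
  then have "\<alpha> * ((H t)\<^sup>2 / (4 * \<beta>\<^sup>2 * B\<^sup>2)) \<le> \<alpha> * (d t)\<^sup>2"
    using alpha_pos by (intro mult_left_mono) auto
  moreover have "\<alpha> / (4 * \<beta>\<^sup>2 * B\<^sup>2) * (H t)\<^sup>2 = \<alpha> * ((H t)\<^sup>2 / (4 * \<beta>\<^sup>2 * B\<^sup>2))"
    by simp
  ultimately show ?thesis using d_squared_le[of t] by linarith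
qed

text \<open>Above 2 \<beta> B^2, H obeys H' \<ge> \<mu> H^2 and would blow up in finite time.\<close>
lemma H_less: "H t < 2 * \<beta> * B\<^sup>2"
proof (rule ccontr)
  define M where "M = 2 * \<beta> * B\<^sup>2"
  define \<mu> where "\<mu> = \<alpha> / (4 * \<beta>\<^sup>2 * B\<^sup>2)"
  have M_pos: "0 < M" and mu_pos: "0 < \<mu>"
    using alpha_pos beta_pos B_pos by (simp_all add: M_def \<mu>_def)
  assume "\<not> H t < 2 * \<beta> * B\<^sup>2"
  then have "M \<le> H t" by (simp add: M_def)
  then have ge_M: "M \<le> H s" if "t \<le> s" for s
    using H_mono[OF that] by simp
  define T where "T = t + 1 / (\<mu> * M) + 1"
  have "t < T" using mu_pos M_pos by (simp add: T_def add_pos_pos)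
  moreover have "((\<lambda>s. - inverse (H s)) has_real_derivative H' s / (H s)\<^sup>2) (at s)" if "t \<le> s" for s
    using ge_M[OF that] M_pos
    by (auto intro!: derivative_eq_intros H_deriv simp: power2_eq_square field_simps)
  ultimately obtain z where z: "t < z" "z < T"
    and mvt: "inverse (H t) - inverse (H T) = (T - t) * (H' z / (H z)\<^sup>2)"
    using MVT2[of t T "\<lambda>s. - inverse (H s)"] by force
  have "\<mu> \<le> H' z / (H z)\<^sup>2"
    using H'_ge_H_squared[of z] ge_M[of z] z M_pos by (simp add: M_def \<mu>_def field_simps)
  then have "(T - t) * \<mu> \<le> inverse (H t) - inverse (H T)"
    unfolding mvt using \<open>t < T\<close> by (intro mult_left_mono) auto
  moreover have "(T - t) * \<mu> = 1 / M + \<mu>" using mu_pos M_pos by (simp add: T_def field_simps)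
  moreover have "inverse (H t) \<le> 1 / M" using \<open>M \<le> H t\<close> M_pos by (simp add: inverse_eq_divide frac_le)
  moreover have "0 < inverse (H T)" using ge_M[of T] \<open>t < T\<close> M_pos by simp
  ultimately show False using mu_pos by linarith
qed

lemma H'_ge_abs_H: "2 * \<alpha> / (3 * \<beta>) * \<bar>H t\<bar> \<le> H' t"
proof -
  have "d t * q t \<le> ((d t)\<^sup>2 + (q t)\<^sup>2) / 2"
    using sum_squares_ge_zero[of "d t - q t" 0] by (simp add: power2_eq_square algebra_simps)
  then have "d t * q t + (q t)\<^sup>2 \<le> ((d t)\<^sup>2 + (q t)\<^sup>2) / 2 + (q t)\<^sup>2"
    by linarith
  also have "\<dots> \<le> 3 / 2 * ((d t)\<^sup>2 + (q t)\<^sup>2)"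
    using zero_le_power2[of "d t"] by (simp add: field_simps)
  finally have "d t * q t + (q t)\<^sup>2 \<le> 3 / 2 * ((d t)\<^sup>2 + (q t)\<^sup>2)" .
  then have "\<beta> * (d t * q t + (q t)\<^sup>2) \<le> \<beta> * (3 / 2 * ((d t)\<^sup>2 + (q t)\<^sup>2))"
    using beta_pos by (intro mult_left_mono) auto
  then have "\<bar>H t\<bar> \<le> \<beta> * (3 / 2 * ((d t)\<^sup>2 + (q t)\<^sup>2))"
    using abs_H_le[of t] by linarith
  also have "\<dots> \<le> \<beta> * (3 / 2 * (H' t / \<alpha>))"
    using H'_ge[of t] alpha_pos beta_pos by (intro mult_left_mono) (auto simp: field_simps)
  finally show ?thesis using alpha_pos beta_pos by (simp add: field_simps)
qed

text \<open>A positive value of H would force linear growth, contradicting the upper bound.\<close>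
lemma H_nonpos: "H t \<le> 0"
proof (rule ccontr)
  define M where "M = 2 * \<beta> * B\<^sup>2"
  define \<kappa> where "\<kappa> = 2 * \<alpha> / (3 * \<beta>)"
  have M_pos: "0 < M" and kappa_pos: "0 < \<kappa>"
    using alpha_pos beta_pos B_pos by (simp_all add: M_def \<kappa>_def)
  assume "\<not> H t \<le> 0"
  then have Ht_pos: "0 < H t" by simp
  define T where "T = t + M / (\<kappa> * H t) + 1"
  have "t < T" using kappa_pos Ht_pos M_pos by (simp add: T_def add_pos_pos)
  then obtain z where z: "t < z" "z < T" and mvt: "H T - H t = (T - t) * H' z"
    using MVT2[of t T H H'] H_deriv by blast
  have "H t \<le> \<bar>H z\<bar>" using H_mono[of t z] z by linarith
  then have "\<kappa> * H t \<le> H' z"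
    using H'_ge_abs_H[of z] mult_left_mono[of _ _ \<kappa>] kappa_pos unfolding \<kappa>_def by force
  then have "(T - t) * (\<kappa> * H t) \<le> H T - H t"
    unfolding mvt using \<open>t < T\<close> by (simp add: mult_left_mono)
  moreover have "(T - t) * (\<kappa> * H t) = M + \<kappa> * H t"
    using kappa_pos Ht_pos by (simp add: T_def field_simps)
  moreover have "0 < \<kappa> * H t" using kappa_pos Ht_pos by simp
  ultimately show False
    using H_less[of T] Ht_pos unfolding M_def by linarith
qed

lemma reflection:
  "energy_estimate (\<lambda>t. - H (- t)) (\<lambda>t. H' (- t)) (\<lambda>t. d (- t)) (\<lambda>t. q (- t)) \<alpha> \<beta> B"
proof (unfold_locales)
  fix t
  have "((\<lambda>t. H (- t)) has_real_derivative H' (- t) * - 1) (at t)"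
    using DERIV_chain2[OF H_deriv DERIV_minus[OF DERIV_ident]] by simp
  from DERIV_minus[OF this]
  show "((\<lambda>t. - H (- t)) has_real_derivative H' (- t)) (at t)" by simp
  show "\<alpha> * ((d (- t))\<^sup>2 + (q (- t))\<^sup>2) \<le> H' (- t)" by (rule H'_ge)
  show "\<bar>- H (- t)\<bar> \<le> \<beta> * (d (- t) * q (- t) + (q (- t))\<^sup>2)" using abs_H_le[of "- t"] by simp
  show "0 \<le> d (- t)" "0 \<le> q (- t)" "q (- t) \<le> B" by (rule d_nonneg q_nonneg q_le)+
qed (rule alpha_pos beta_pos B_pos)+

lemma q_eq_0: "q t = 0"
proof -
  have "H s = 0" for s
    using H_nonpos[of s] energy_estimate.H_nonpos[OF reflection, of "- s"] by simp
  then have "H = (\<lambda>_. 0)" by auto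
  then have "(H has_real_derivative 0) (at t)" by simp
  then have "H' t = 0" by (rule DERIV_unique[OF H_deriv])
  then have "(d t)\<^sup>2 + (q t)\<^sup>2 \<le> 0"
    using H'_ge[of t] alpha_pos by (simp add: mult_le_0_iff)
  then show ?thesis by (simp add: sum_power2_le_zero_iff)
qed

end

lemma re_lyapunov_derivative:
  fixes l P P1 :: complex and v c g w :: real
  shows "Re (cnj l * (((- 2 * of_real (c * g) * l * P1 + of_real g * (l\<^sup>2 + of_real w) * P)
              - of_real (g * w - v\<^sup>2) * P - of_real v * P1) * cnj P
          + (P1 - of_real v * P) * cnj P1 + of_real (c * g) * l * (P1 * cnj P + P * cnj P1)))
       = Re l * ((cmod (P1 - of_real v * P))\<^sup>2 + g * (cmod l)\<^sup>2 * (cmod P)\<^sup>2)"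
proof -
  obtain x y where l: "l = Complex x y" by (metis complex.exhaust_sel)
  obtain a b where P: "P = Complex a b" by (metis complex.exhaust_sel)
  obtain a1 b1 where P1: "P1 = Complex a1 b1" by (metis complex.exhaust_sel)
  show ?thesis unfolding cmod_power2 l P P1
    by (simp add: cmod_power2 power2_eq_square algebra_simps)
qed

lemma lyapunov_has_real_derivative:
  fixes p p1 p2 :: "real \<Rightarrow> complex" and v w :: "real \<Rightarrow> real" and l :: complex and c g :: real
  assumes v: "\<And>z. (v has_real_derivative g * w z - (v z)\<^sup>2) (at z)"
    and p: "\<And>z. (p has_vector_derivative p1 z) (at z)"
    and p1: "\<And>z. (p1 has_vector_derivative p2 z) (at z)"
    and ode: "\<And>z. p2 z = - 2 * of_real (c * g) * l * p1 z + of_real g * (l\<^sup>2 + of_real (w z)) * p z"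
  shows "((\<lambda>z. Re (cnj l * ((p1 z - of_real (v z) * p z) * cnj (p z) + of_real (c * g) * l * (p z * cnj (p z)))))
           has_real_derivative
         Re l * ((cmod (p1 z - of_real (v z) * p z))\<^sup>2 + g * (cmod l)\<^sup>2 * (cmod (p z))\<^sup>2)) (at z)"
proof -
  have v': "((\<lambda>z. complex_of_real (v z)) has_vector_derivative of_real (g * w z - (v z)\<^sup>2)) (at z)"
    by (rule has_vector_derivative_of_real[OF v])
  have "((\<lambda>z. cnj l * ((p1 z - of_real (v z) * p z) * cnj (p z) + of_real (c * g) * l * (p z * cnj (p z))))
      has_vector_derivative
      cnj l * ((p2 z - of_real (g * w z - (v z)\<^sup>2) * p z - of_real (v z) * p1 z) * cnj (p z)
        + (p1 z - of_real (v z) * p z) * cnj (p1 z) + of_real (c * g) * l * (p1 z * cnj (p z) + p z * cnj (p1 z)))) (at z)"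
    by (rule derivative_eq_intros v' p p1 refl)+ (simp add: algebra_simps)
  then have "((\<lambda>z. Re (cnj l * ((p1 z - of_real (v z) * p z) * cnj (p z) + of_real (c * g) * l * (p z * cnj (p z)))))
      has_real_derivative
      Re (cnj l * ((p2 z - of_real (g * w z - (v z)\<^sup>2) * p z - of_real (v z) * p1 z) * cnj (p z)
        + (p1 z - of_real (v z) * p z) * cnj (p1 z) + of_real (c * g) * l * (p1 z * cnj (p z) + p z * cnj (p1 z))))) (at z)"
    by (rule has_field_derivative_Re)
  then show ?thesis unfolding ode re_lyapunov_derivative .
qed

lemma norm_lyapunov_le:
  fixes l D P :: complex and c g :: real
  shows "cmod (cnj l * (D * cnj P + of_real (c * g) * l * (P * cnj P)))
           \<le> cmod l * (cmod D * cmod P + \<bar>c * g\<bar> * cmod l * (cmod P)\<^sup>2)"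
proof -
  have "cmod (D * cnj P + of_real (c * g) * l * (P * cnj P))
          \<le> cmod (D * cnj P) + cmod (of_real (c * g) * l * (P * cnj P))"
    by (rule norm_triangle_ineq)
  also have "\<dots> = cmod D * cmod P + \<bar>c * g\<bar> * cmod l * (cmod P)\<^sup>2"
    by (simp add: norm_mult abs_mult power2_eq_square)
  finally show ?thesis by (simp add: norm_mult mult_left_mono)
qed

lemma subluminal_rotational_riccati:
  assumes "subluminal_rotational c f"
  obtains v where "\<And>z. (v has_real_derivative 1 / (1 - c\<^sup>2) * cos (f z) - (v z)\<^sup>2) (at z)"
proof -
  from assms obtain f1 f2 E where c: "c\<^sup>2 < 1" and E: "E < 0" "\<And>z. wave_energy c f z = E"
    and f1: "\<And>z. (f has_real_derivative f1 z) (at z)"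
    and f2: "\<And>z. (f1 has_real_derivative f2 z) (at z)"
    and wave: "\<And>z. (c\<^sup>2 - 1) * f2 z + sin (f z) = 0"
    unfolding subluminal_rotational_def traveling_wave_def by blast
  define g where "g = 1 / (1 - c\<^sup>2)"
  have f1_nonzero: "f1 z \<noteq> 0" for z
  proof
    assume "f1 z = 0"
    then have "1 - cos (f z) = E"
      using E(2)[of z] DERIV_imp_deriv[OF f1] by (simp add: wave_energy_def)
    then show False using E(1) cos_le_one[of "f z"] by linarith
  qed
  have "f2 = (\<lambda>z. g * sin (f z))"
    using wave c by (auto simp: g_def field_simps)
  then have f2': "(f2 has_real_derivative g * cos (f z) * f1 z) (at z)" for z
    by (auto intro!: derivative_eq_intros f1)
  have "((\<lambda>z. f2 z / f1 z) has_real_derivative g * cos (f z) - (f2 z / f1 z)\<^sup>2) (at z)" for z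
    using f2'[of z] f2[of z] f1_nonzero[of z]
    by (auto intro!: derivative_eq_intros simp: field_simps power2_eq_square)
  then show ?thesis using that unfolding g_def by blast
qed

lemma spectrum_P_ode:
  assumes "c\<^sup>2 < 1" and "l \<in> spectrum_P c f"
  defines "g \<equiv> 1 / (1 - c\<^sup>2)"
  obtains p p1 p2 :: "real \<Rightarrow> complex"
  where "\<And>z. (p has_vector_derivative p1 z) (at z)"
    and "\<And>z. (p1 has_vector_derivative p2 z) (at z)"
    and "\<And>z. p2 z = - 2 * of_real (c * g) * l * p1 z + of_real g * (l\<^sup>2 + of_real (cos (f z))) * p z"
    and "bounded (range p)" and "\<exists>z. p z \<noteq> 0"
proof -
  have gamma: "wave_gamma c = - g"
    using assms(1) by (simp add: wave_gamma_def g_def field_simps)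
  from assms(2) obtain p p1 p2 where
    ode: "\<forall>z. (p has_vector_derivative p1 z) (at z) \<and> (p1 has_vector_derivative p2 z) (at z) \<and>
       p2 z - 2 * of_real c * of_real (wave_gamma c) * l * p1 z
         + of_real (wave_gamma c) * (l\<^sup>2 + of_real (cos (f z))) * p z = 0"
    and "bounded (range p)" and "\<exists>z. p z \<noteq> 0"
    unfolding spectrum_P_def by blast
  moreover have "p2 z = - 2 * of_real (c * g) * l * p1 z + of_real g * (l\<^sup>2 + of_real (cos (f z))) * p z"
    for z
  proof -
    have "p2 z - (- 2 * of_real (c * g) * l * p1 z + of_real g * (l\<^sup>2 + of_real (cos (f z))) * p z) = 0"
      using ode gamma by (simp add: algebra_simps)
    then show ?thesis by simp
  qed
  ultimately show ?thesis using that by blast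
qed

lemma bounded_solution_eq_0:
  fixes p p1 p2 :: "real \<Rightarrow> complex" and v w :: "real \<Rightarrow> real" and l :: complex and c g :: real
  assumes v: "\<And>z. (v has_real_derivative g * w z - (v z)\<^sup>2) (at z)"
    and p: "\<And>z. (p has_vector_derivative p1 z) (at z)"
    and p1: "\<And>z. (p1 has_vector_derivative p2 z) (at z)"
    and ode: "\<And>z. p2 z = - 2 * of_real (c * g) * l * p1 z + of_real g * (l\<^sup>2 + of_real (w z)) * p z"
    and bounded: "bounded (range p)" and g_pos: "0 < g" and Re_l: "Re l \<noteq> 0"
  shows "p z = 0"
proof -
  define D where "D z = p1 z - of_real (v z) * p z" for z
  define \<Phi> where "\<Phi> z = Re (cnj l * (D z * cnj (p z) + of_real (c * g) * l * (p z * cnj (p z))))" for z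
  define a where "a = g * (cmod l)\<^sup>2"
  obtain B0 where B0: "\<And>z. cmod (p z) \<le> B0"
    using bounded unfolding bounded_iff by auto
  have "l \<noteq> 0" using Re_l by auto
  then have a_pos: "0 < a" using g_pos by (simp add: a_def)
  have "energy_estimate (\<lambda>z. sgn (Re l) * \<Phi> z)
          (\<lambda>z. \<bar>Re l\<bar> * ((cmod (D z))\<^sup>2 + a * (cmod (p z))\<^sup>2)) (\<lambda>z. cmod (D z)) (\<lambda>z. cmod (p z))
          (\<bar>Re l\<bar> * min 1 a) (cmod l + \<bar>c * g\<bar> * (cmod l)\<^sup>2 + 1) (max B0 1)"
  proof (unfold_locales)
    fix z
    have "(\<Phi> has_real_derivative Re l * ((cmod (D z))\<^sup>2 + a * (cmod (p z))\<^sup>2)) (at z)"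
      unfolding \<Phi>_def[abs_def] D_def a_def by (rule lyapunov_has_real_derivative[OF v p p1 ode])
    moreover have "sgn (Re l) * (Re l * X) = \<bar>Re l\<bar> * X" for X
      by (metis abs_sgn mult.assoc mult.commute)
    ultimately show "((\<lambda>z. sgn (Re l) * \<Phi> z) has_real_derivative
            \<bar>Re l\<bar> * ((cmod (D z))\<^sup>2 + a * (cmod (p z))\<^sup>2)) (at z)"
      using DERIV_cmult[where c = "sgn (Re l)"] by metis
    have "min 1 a * (cmod (D z))\<^sup>2 \<le> (cmod (D z))\<^sup>2"
      using mult_right_mono[of "min 1 a" 1 "(cmod (D z))\<^sup>2"] by simp
    moreover have "min 1 a * (cmod (p z))\<^sup>2 \<le> a * (cmod (p z))\<^sup>2"
      by (intro mult_right_mono) auto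
    ultimately have "min 1 a * ((cmod (D z))\<^sup>2 + (cmod (p z))\<^sup>2) \<le> (cmod (D z))\<^sup>2 + a * (cmod (p z))\<^sup>2"
      by (simp add: distrib_left)
    then show "\<bar>Re l\<bar> * min 1 a * ((cmod (D z))\<^sup>2 + (cmod (p z))\<^sup>2)
                 \<le> \<bar>Re l\<bar> * ((cmod (D z))\<^sup>2 + a * (cmod (p z))\<^sup>2)"
      by (simp add: mult.assoc mult_left_mono)
    have "\<bar>sgn (Re l) * \<Phi> z\<bar> \<le> cmod l * (cmod (D z) * cmod (p z) + \<bar>c * g\<bar> * cmod l * (cmod (p z))\<^sup>2)"
      using abs_Re_le_cmod norm_lyapunov_le order_trans
      unfolding \<Phi>_def by (fastforce simp: abs_mult sgn_if)
    also have "\<dots> \<le> (cmod l + \<bar>c * g\<bar> * (cmod l)\<^sup>2 + 1) * (cmod (D z) * cmod (p z) + (cmod (p z))\<^sup>2)"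
      by (simp add: algebra_simps power2_eq_square add_mono mult_right_mono)
    finally show "\<bar>sgn (Re l) * \<Phi> z\<bar>
                    \<le> (cmod l + \<bar>c * g\<bar> * (cmod l)\<^sup>2 + 1) * (cmod (D z) * cmod (p z) + (cmod (p z))\<^sup>2)" .
    show "cmod (p z) \<le> max B0 1" using B0[of z] by simp
  qed (use Re_l a_pos in \<open>auto simp: add_nonneg_pos\<close>)
  from energy_estimate.q_eq_0[OF this, of z] show ?thesis by simp
qed

theorem lemma4p1:
  fixes c :: real and f :: "real \<Rightarrow> real"
  assumes "subluminal_rotational c f"
  shows "\<forall>l\<in>spectrum_P c f. Re l = 0"
proof
  fix l assume l: "l \<in> spectrum_P c f"
  have c: "c\<^sup>2 < 1" using assms by (simp add: subluminal_rotational_def)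
  obtain v where v: "\<And>z. (v has_real_derivative 1 / (1 - c\<^sup>2) * cos (f z) - (v z)\<^sup>2) (at z)"
    using subluminal_rotational_riccati[OF assms] by blast
  obtain p p1 p2 where p: "\<And>z. (p has_vector_derivative p1 z) (at z)"
    and p1: "\<And>z. (p1 has_vector_derivative p2 z) (at z)"
    and ode: "\<And>z. p2 z = - 2 * of_real (c * (1 / (1 - c\<^sup>2))) * l * p1 z
                          + of_real (1 / (1 - c\<^sup>2)) * (l\<^sup>2 + of_real (cos (f z))) * p z"
    and bounded: "bounded (range p)" and nontrivial: "\<exists>z. p z \<noteq> 0"
    using spectrum_P_ode[OF c l] by blast
  show "Re l = 0"
  proof (rule ccontr)
    assume "Re l \<noteq> 0"
    with c have "p z = 0" for z
      using bounded_solution_eq_0[OF v p p1 ode bounded] by simp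
    with nontrivial show False by simp
  qed
qed

end
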